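(* Let $G$ be a word-hyperbolic group with a marked finite generating set $A$, let $H\le G$ be a quasiconvex subgroup, and let $Y=\Gamma(G/H,A)$ with its simplicial metric $d_Y$. Then there exists $\delta'\ge 0$ such that every geodesic bigon in $(Y,d_Y)$ is $\delta'$-thin, i.e. whenever $\alpha,\beta$ are geodesic segments in $Y$ with the same endpoints, $\alpha$ lies in the closed $\delta'$-neighborhood of $\beta$ and $\beta$ lies in the closed $\delta'$-neighborhood of $\alpha$.
   Context: A marked finite generating set of $G$ is a map $\pi:A\to G$ from a finite alphabet $A$ such that $\pi(A)$ generates $G$ (non-injective $\pi$ and $1\in\pi(A)$ allowed). The relative Cayley graph $\Gamma(G/H,A)$ has vertex set the right cosets $Hg$ ($g\in G$) and, for each $(Hg,a)\in G/H\times A$, an edge from $Hg$ to $Hg\pi(a)$ labeled $a$; all edges have length one. $H$ quasiconvex means there is $C>0$ such that every geodesic in the Cayley graph $\Gamma(G,A)$ with endpoints in $H$ lies in the $C$-neighborhood of $H$. *)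

theory Defs
  imports Complex_Main "HOL-Algebra.Coset" "HOL-Algebra.Generated_Groups"
begin

text \<open>A (multi)graph is given by a vertex set V, an edge index set E and
  source/target maps; loops and multiple edges are allowed.  A point of the
  geometric realization is either a vertex or an interior point Ed e t
  (0 < t < 1) of an edge e, at distance t from src e and 1 - t from tgt e.\<close>

datatype ('v, 'e) mgpoint = Vx 'v | Ed 'e real

definition mg_points :: "'v set \<Rightarrow> 'e set \<Rightarrow> ('v, 'e) mgpoint set" where
  "mg_points V E = Vx ` V \<union> {Ed e t | e t. e \<in> E \<and> 0 < t \<and> t < 1}"

definition mg_adj :: "'e set \<Rightarrow> ('e \<Rightarrow> 'v) \<Rightarrow> ('e \<Rightarrow> 'v) \<Rightarrow> 'v \<Rightarrow> 'v \<Rightarrow> bool" where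
  "mg_adj E src tgt u v \<longleftrightarrow>
     (\<exists>e\<in>E. (src e = u \<and> tgt e = v) \<or> (src e = v \<and> tgt e = u))"

definition mg_vdist :: "'e set \<Rightarrow> ('e \<Rightarrow> 'v) \<Rightarrow> ('e \<Rightarrow> 'v) \<Rightarrow> 'v \<Rightarrow> 'v \<Rightarrow> nat" where
  "mg_vdist E src tgt u v = (LEAST n. (mg_adj E src tgt ^^ n) u v)"

fun mg_ends :: "('e \<Rightarrow> 'v) \<Rightarrow> ('e \<Rightarrow> 'v) \<Rightarrow> ('v, 'e) mgpoint \<Rightarrow> ('v \<times> real) set" where
  "mg_ends src tgt (Vx v) = {(v, 0)}"
| "mg_ends src tgt (Ed e t) = {(src e, t), (tgt e, 1 - t)}"

fun mg_same_edge :: "('v, 'e) mgpoint \<Rightarrow> ('v, 'e) mgpoint \<Rightarrow> real set" where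
  "mg_same_edge (Ed e s) (Ed e' t) = (if e = e' then {\<bar>s - t\<bar>} else {})"
| "mg_same_edge _ _ = {}"

text \<open>The path metric of the geometric realization (simplicial metric).\<close>
definition mg_dist :: "'e set \<Rightarrow> ('e \<Rightarrow> 'v) \<Rightarrow> ('e \<Rightarrow> 'v) \<Rightarrow>
    ('v, 'e) mgpoint \<Rightarrow> ('v, 'e) mgpoint \<Rightarrow> real" where
  "mg_dist E src tgt x y =
     Min ({a + real (mg_vdist E src tgt p q) + b | p a q b.
             (p, a) \<in> mg_ends src tgt x \<and> (q, b) \<in> mg_ends src tgt y}
          \<union> mg_same_edge x y)"

definition mg_geodesic :: "'v set \<Rightarrow> 'e set \<Rightarrow> ('e \<Rightarrow> 'v) \<Rightarrow> ('e \<Rightarrow> 'v) \<Rightarrow>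
    (real \<Rightarrow> ('v, 'e) mgpoint) \<Rightarrow> real \<Rightarrow> bool" where
  "mg_geodesic V E src tgt \<gamma> L \<longleftrightarrow> 0 \<le> L \<and>
     (\<forall>s\<in>{0..L}. \<gamma> s \<in> mg_points V E) \<and>
     (\<forall>s\<in>{0..L}. \<forall>t\<in>{0..L}. mg_dist E src tgt (\<gamma> s) (\<gamma> t) = \<bar>s - t\<bar>)"

definition mg_nbhd :: "'v set \<Rightarrow> 'e set \<Rightarrow> ('e \<Rightarrow> 'v) \<Rightarrow> ('e \<Rightarrow> 'v) \<Rightarrow>
    real \<Rightarrow> ('v, 'e) mgpoint set \<Rightarrow> ('v, 'e) mgpoint set" where
  "mg_nbhd V E src tgt r S =
     {x \<in> mg_points V E. \<exists>y\<in>S. mg_dist E src tgt x y \<le> r}"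

definition marked_gen_set :: "('g, 'b) monoid_scheme \<Rightarrow> 'a set \<Rightarrow> ('a \<Rightarrow> 'g) \<Rightarrow> bool" where
  "marked_gen_set G A \<pi> \<longleftrightarrow> finite A \<and> \<pi> ` A \<subseteq> carrier G \<and>
     generate G (\<pi> ` A) = carrier G"

text \<open>Relative Cayley graph Gamma(G/H, A): vertices the right cosets H g, one
  edge (H g, a) from H g to H g pi(a) for each coset and each letter.\<close>
definition rcg_V :: "('g, 'b) monoid_scheme \<Rightarrow> 'g set \<Rightarrow> 'g set set" where
  "rcg_V G H = rcosets\<^bsub>G\<^esub> H"

definition rcg_E :: "('g, 'b) monoid_scheme \<Rightarrow> 'g set \<Rightarrow> 'a set \<Rightarrow> ('g set \<times> 'a) set" where
  "rcg_E G H A = (rcosets\<^bsub>G\<^esub> H) \<times> A"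

definition rcg_src :: "('g set \<times> 'a) \<Rightarrow> 'g set" where
  "rcg_src e = fst e"

definition rcg_tgt :: "('g, 'b) monoid_scheme \<Rightarrow> ('a \<Rightarrow> 'g) \<Rightarrow> ('g set \<times> 'a) \<Rightarrow> 'g set" where
  "rcg_tgt G \<pi> e = fst e #>\<^bsub>G\<^esub> \<pi> (snd e)"

abbreviation rcg_points where
  "rcg_points G H A \<equiv> mg_points (rcg_V G H) (rcg_E G H A)"

abbreviation rcg_dist where
  "rcg_dist G \<pi> H A \<equiv> mg_dist (rcg_E G H A) rcg_src (rcg_tgt G \<pi>)"

abbreviation rcg_geodesic where
  "rcg_geodesic G \<pi> H A \<equiv> mg_geodesic (rcg_V G H) (rcg_E G H A) rcg_src (rcg_tgt G \<pi>)"

abbreviation rcg_nbhd where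
  "rcg_nbhd G \<pi> H A \<equiv> mg_nbhd (rcg_V G H) (rcg_E G H A) rcg_src (rcg_tgt G \<pi>)"

text \<open>The Cayley graph Gamma(G, A) is the relative Cayley graph for the
  trivial subgroup; its vertex for g is the coset {g}.\<close>

definition hyperbolic_group :: "('g, 'b) monoid_scheme \<Rightarrow> 'a set \<Rightarrow> ('a \<Rightarrow> 'g) \<Rightarrow> bool" where
  "hyperbolic_group G A \<pi> \<longleftrightarrow> group G \<and> marked_gen_set G A \<pi> \<and>
     (\<exists>\<delta>\<ge>0. \<forall>\<alpha> La \<beta> Lb \<gamma> Lc.
        rcg_geodesic G \<pi> {\<one>\<^bsub>G\<^esub>} A \<alpha> La \<and> rcg_geodesic G \<pi> {\<one>\<^bsub>G\<^esub>} A \<beta> Lb \<and>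
        rcg_geodesic G \<pi> {\<one>\<^bsub>G\<^esub>} A \<gamma> Lc \<and>
        \<alpha> La = \<beta> 0 \<and> \<beta> Lb = \<gamma> 0 \<and> \<gamma> Lc = \<alpha> 0 \<longrightarrow>
        \<alpha> ` {0..La} \<subseteq> rcg_nbhd G \<pi> {\<one>\<^bsub>G\<^esub>} A \<delta> (\<beta> ` {0..Lb} \<union> \<gamma> ` {0..Lc}))"

definition quasiconvex :: "('g, 'b) monoid_scheme \<Rightarrow> 'a set \<Rightarrow> ('a \<Rightarrow> 'g) \<Rightarrow> 'g set \<Rightarrow> bool" where
  "quasiconvex G A \<pi> H \<longleftrightarrow>
     (\<exists>C>0. \<forall>\<alpha> L. rcg_geodesic G \<pi> {\<one>\<^bsub>G\<^esub>} A \<alpha> L \<and>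
        \<alpha> 0 \<in> (\<lambda>h. Vx {h}) ` H \<and> \<alpha> L \<in> (\<lambda>h. Vx {h}) ` H \<longrightarrow>
        \<alpha> ` {0..L} \<subseteq> rcg_nbhd G \<pi> {\<one>\<^bsub>G\<^esub>} A C ((\<lambda>h. Vx {h}) ` H))"

end

theory Submission
  imports Defs
begin

text \<open>
  Write \<open>X\<close> for the Cayley graph \<open>Gamma(G, A)\<close> and \<open>Y\<close> for \<open>Gamma(G/H, A)\<close>.  Paths in
  \<open>Y\<close> lift to paths in \<open>X\<close> and paths in \<open>X\<close> project to \<open>Y\<close>, so
  \<open>d\<^sub>Y(Ha, Hb) = min {d\<^sub>X(a, hb) | h \<in> H}\<close>; in particular \<open>d\<^sub>Y(Ha, H) = d\<^sub>X(a, H)\<close>.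
  Measure Gromov products in \<open>Y\<close> from the base vertex \<open>H\<close>.  A geodesic from \<open>a\<close> to \<open>b\<close> in \<open>X\<close>
  comes within \<open>(d\<^sub>X(a, H) + d\<^sub>X(b, H) - d\<^sub>X(a, b))/2 + const\<close> of \<open>H\<close>: compare it, via thin
  triangles, with the path through the points of \<open>H\<close> nearest to \<open>a\<close> and \<open>b\<close>, whose middle
  part stays near \<open>H\<close> by quasiconvexity.  Feeding this into a thin triangle \<open>a, b, c\<close> of \<open>X\<close>
  gives \<open>(U|W)\<^sub>H \<ge> min ((U|Z)\<^sub>H, (Z|W)\<^sub>H) - K\<close> for all vertices of \<open>Y\<close>.  Such an inequality
  at a single base point implies the four-point condition, and the four-point condition keeps
  the points at equal arc length on the two sides of a geodesic bigon uniformly close.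
\<close>

section \<open>Distances in metric graphs\<close>

lemma mg_adj_sym: "mg_adj E src tgt u v \<Longrightarrow> mg_adj E src tgt v u"
  unfolding mg_adj_def by blast

lemma mg_adj_relpowp_sym: "(mg_adj E src tgt ^^ n) u v \<Longrightarrow> (mg_adj E src tgt ^^ n) v u"
proof (induction n arbitrary: v)
  case (Suc n)
  then obtain w where "(mg_adj E src tgt ^^ n) u w" "mg_adj E src tgt w v"
    by (auto elim: relpowp_Suc_E)
  then show ?case using Suc.IH mg_adj_sym relpowp_Suc_I2 by metis
qed simp

lemma mg_vdist_le: "(mg_adj E src tgt ^^ n) u v \<Longrightarrow> mg_vdist E src tgt u v \<le> n"
  unfolding mg_vdist_def by (rule Least_le)

lemma mg_vdist_relpowp:
  "(mg_adj E src tgt ^^ n) u v \<Longrightarrow> (mg_adj E src tgt ^^ mg_vdist E src tgt u v) u v"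
  unfolding mg_vdist_def by (rule LeastI)

lemma mg_vdist_refl [simp]: "mg_vdist E src tgt u u = 0"
  using mg_vdist_le[of 0 E src tgt u u] by simp

lemma mg_vdist_adj_le: "mg_adj E src tgt u v \<Longrightarrow> mg_vdist E src tgt u v \<le> 1"
  by (metis mg_vdist_le relpowp_1)

lemma relpowp_map:
  assumes "\<And>x y. P x y \<Longrightarrow> Q (f x) (f y)" and "(P ^^ n) x y"
  shows "(Q ^^ n) (f x) (f y)"
  using assms(2)
proof (induction n arbitrary: y)
  case (Suc n)
  then obtain z where "(P ^^ n) x z" "P z y" by (auto elim: relpowp_Suc_E)
  then show ?case using Suc.IH assms(1) by (meson relpowp_Suc_I)
qed simp

lemma floor_ceiling_nat_bounds:
  fixes s :: real
  assumes "0 \<le> s" "s \<le> real n"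
  shows "nat \<lfloor>s\<rfloor> \<le> n" "nat \<lceil>s\<rceil> \<le> n"
    "real (nat \<lfloor>s\<rfloor>) = of_int \<lfloor>s\<rfloor>" "real (nat \<lceil>s\<rceil>) = of_int \<lceil>s\<rceil>"
proof -
  show "nat \<lfloor>s\<rfloor> \<le> n" using floor_mono[OF assms(2)] by (simp add: nat_le_iff)
  show "nat \<lceil>s\<rceil> \<le> n" using ceiling_mono[OF assms(2)] by (simp add: nat_le_iff)
  show "real (nat \<lfloor>s\<rfloor>) = of_int \<lfloor>s\<rfloor>" "real (nat \<lceil>s\<rceil>) = of_int \<lceil>s\<rceil>"
    using assms(1) by simp_all
qed

lemma mg_ends_finite: "finite (mg_ends src tgt x)"
  by (cases x) auto

lemma mg_ends_nonempty: "\<exists>p a. (p, a) \<in> mg_ends src tgt x"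
  by (cases x) auto

lemma mg_dist_candidates_finite:
  "finite ({a + real (mg_vdist E src tgt p q) + b | p a q b.
      (p, a) \<in> mg_ends src tgt x \<and> (q, b) \<in> mg_ends src tgt y} \<union> mg_same_edge x y)"
proof -
  have "{a + real (mg_vdist E src tgt p q) + b | p a q b.
      (p, a) \<in> mg_ends src tgt x \<and> (q, b) \<in> mg_ends src tgt y} =
    (\<lambda>((p, a), (q, b)). a + real (mg_vdist E src tgt p q) + b) `
      (mg_ends src tgt x \<times> mg_ends src tgt y)"
    by force
  moreover have "finite (mg_same_edge x y)"
    by (cases x; cases y) simp_all
  ultimately show ?thesis
    using finite_imageI[OF finite_cartesian_product[OF mg_ends_finite mg_ends_finite]] by simp
qed

lemma mg_dist_le_via_ends:
  "(p, a) \<in> mg_ends src tgt x \<Longrightarrow> (q, b) \<in> mg_ends src tgt y \<Longrightarrow>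
    mg_dist E src tgt x y \<le> a + real (mg_vdist E src tgt p q) + b"
  unfolding mg_dist_def by (rule Min_le[OF mg_dist_candidates_finite]) blast

lemma mg_dist_le_same_edge: "d \<in> mg_same_edge x y \<Longrightarrow> mg_dist E src tgt x y \<le> d"
  unfolding mg_dist_def by (rule Min_le[OF mg_dist_candidates_finite]) blast

lemma mg_dist_cases:
  obtains p a q b where "(p, a) \<in> mg_ends src tgt x" "(q, b) \<in> mg_ends src tgt y"
      "mg_dist E src tgt x y = a + real (mg_vdist E src tgt p q) + b"
  | "mg_dist E src tgt x y \<in> mg_same_edge x y"
proof -
  obtain p a q b where "(p, a) \<in> mg_ends src tgt x" "(q, b) \<in> mg_ends src tgt y"
    using mg_ends_nonempty by metis
  then have "mg_dist E src tgt x y \<in> {a + real (mg_vdist E src tgt p q) + b | p a q b.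
      (p, a) \<in> mg_ends src tgt x \<and> (q, b) \<in> mg_ends src tgt y} \<union> mg_same_edge x y"
    unfolding mg_dist_def by (intro Min_in[OF mg_dist_candidates_finite]) blast
  then show thesis using that by blast
qed

lemma mg_dist_Vx [simp]: "mg_dist E src tgt (Vx u) (Vx v) = real (mg_vdist E src tgt u v)"
  unfolding mg_dist_def by simp

locale mgraph =
  fixes V :: "'v set" and E :: "'e set" and src tgt :: "'e \<Rightarrow> 'v"
  assumes src_in_V: "e \<in> E \<Longrightarrow> src e \<in> V" and tgt_in_V: "e \<in> E \<Longrightarrow> tgt e \<in> V"
    and connected: "u \<in> V \<Longrightarrow> v \<in> V \<Longrightarrow> \<exists>n. (mg_adj E src tgt ^^ n) u v"
begin

abbreviation adj where "adj \<equiv> mg_adj E src tgt"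
abbreviation vdist where "vdist \<equiv> mg_vdist E src tgt"
abbreviation pdist where "pdist \<equiv> mg_dist E src tgt"
abbreviation points where "points \<equiv> mg_points V E"
abbreviation ends where "ends \<equiv> mg_ends src tgt"
abbreviation geodesic where "geodesic \<equiv> mg_geodesic V E src tgt"
abbreviation nbhd where "nbhd \<equiv> mg_nbhd V E src tgt"

lemma adj_in_V: "adj u v \<Longrightarrow> u \<in> V \<and> v \<in> V"
  using src_in_V tgt_in_V unfolding mg_adj_def by blast

lemma vdist_sym: "u \<in> V \<Longrightarrow> v \<in> V \<Longrightarrow> vdist u v = vdist v u"
  by (meson antisym connected mg_adj_relpowp_sym mg_vdist_le mg_vdist_relpowp)

lemma vdist_triangle: "u \<in> V \<Longrightarrow> v \<in> V \<Longrightarrow> w \<in> V \<Longrightarrow> vdist u w \<le> vdist u v + vdist v w"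
  by (meson connected relpowp_trans mg_vdist_le mg_vdist_relpowp)

definition shortest_path :: "(nat \<Rightarrow> 'v) \<Rightarrow> nat \<Rightarrow> bool" where
  "shortest_path f n \<longleftrightarrow> f 0 \<in> V \<and> (\<forall>i<n. adj (f i) (f (Suc i))) \<and> vdist (f 0) (f n) = n"

lemma shortest_path_adj: "shortest_path f n \<Longrightarrow> i < n \<Longrightarrow> adj (f i) (f (Suc i))"
  unfolding shortest_path_def by blast

lemma shortest_path_relpowp:
  assumes "shortest_path f n" "i \<le> k" "k \<le> n"
  shows "(adj ^^ (k - i)) (f i) (f k)"
  using assms(2,3)
proof (induction k)
  case (Suc k)
  show ?case
  proof (cases "i = Suc k")
    case False
    then have "(adj ^^ (k - i)) (f i) (f k)" using Suc by simp
    moreover have "adj (f k) (f (Suc k))" using shortest_path_adj[OF assms(1)] Suc.prems by simp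
    ultimately have "(adj ^^ Suc (k - i)) (f i) (f (Suc k))" by (rule relpowp_Suc_I)
    then show ?thesis using False Suc.prems by (simp add: Suc_diff_le)
  qed simp
qed simp

lemma shortest_path_in_V: "shortest_path f n \<Longrightarrow> i \<le> n \<Longrightarrow> f i \<in> V"
proof (induction i)
  case (Suc i)
  then show ?case using adj_in_V shortest_path_adj by (meson Suc_le_lessD)
qed (simp add: shortest_path_def)

lemma shortest_path_vdist:
  assumes sp: "shortest_path f n" and "i \<le> k" "k \<le> n"
  shows "vdist (f i) (f k) = k - i"
proof -
  have in_V: "\<And>j. j \<le> n \<Longrightarrow> f j \<in> V" using shortest_path_in_V[OF sp] .
  have "vdist (f i) (f k) \<le> k - i" "vdist (f 0) (f i) \<le> i" "vdist (f k) (f n) \<le> n - k"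
    using shortest_path_relpowp[OF sp] assms(2,3) mg_vdist_le
    by (metis diff_zero le0 order.refl order.trans)+
  moreover have "n \<le> vdist (f 0) (f i) + vdist (f i) (f k) + vdist (f k) (f n)"
    using vdist_triangle[of "f 0" "f i" "f n"] vdist_triangle[of "f i" "f k" "f n"]
      in_V assms(2,3) sp unfolding shortest_path_def by fastforce
  ultimately show ?thesis using assms(2,3) by linarith
qed

lemma shortest_path_vdist_abs:
  assumes sp: "shortest_path f n" and "i \<le> n" "k \<le> n"
  shows "real (vdist (f i) (f k)) = \<bar>real i - real k\<bar>"
proof (cases "i \<le> k")
  case True
  then show ?thesis using shortest_path_vdist[OF sp True assms(3)] by simp
next
  case False
  then have "vdist (f k) (f i) = i - k" using shortest_path_vdist[OF sp, of k i] assms by simp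
  then show ?thesis
    using vdist_sym shortest_path_in_V[OF sp] assms False by (simp add: of_nat_diff)
qed

lemma shortest_path_inj: "shortest_path f n \<Longrightarrow> i \<le> n \<Longrightarrow> k \<le> n \<Longrightarrow> f i = f k \<Longrightarrow> i = k"
  using shortest_path_vdist_abs by fastforce

lemma shortest_path_exists:
  assumes "u \<in> V" "v \<in> V"
  obtains f where "shortest_path f (vdist u v)" "f 0 = u" "f (vdist u v) = v"
proof -
  obtain m where "(adj ^^ m) u v" using connected assms by blast
  then have "(adj ^^ vdist u v) u v" by (rule mg_vdist_relpowp)
  then obtain f where "f 0 = u" "f (vdist u v) = v" "\<forall>i<vdist u v. adj (f i) (f (Suc i))"
    unfolding relpowp_fun_conv by blast
  then show ?thesis using that assms(1) unfolding shortest_path_def by auto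
qed

lemma shortest_path_rev:
  assumes sp: "shortest_path f n"
  shows "shortest_path (\<lambda>i. f (n - i)) n"
proof -
  have "adj (f (n - i)) (f (n - Suc i))" if "i < n" for i
    using shortest_path_adj[OF sp, of "n - Suc i"] that mg_adj_sym by (simp add: Suc_diff_Suc)
  moreover have "vdist (f n) (f 0) = n"
    using vdist_sym shortest_path_in_V[OF sp] sp unfolding shortest_path_def by auto
  ultimately show ?thesis using shortest_path_in_V[OF sp] unfolding shortest_path_def by auto
qed

definition edge_between :: "'v \<Rightarrow> 'v \<Rightarrow> 'e" where
  "edge_between u v = (SOME e. e \<in> E \<and> (src e = u \<and> tgt e = v \<or> src e = v \<and> tgt e = u))"

lemma edge_between:
  assumes "adj u v"
  shows "edge_between u v \<in> E \<and> (src (edge_between u v) = u \<and> tgt (edge_between u v) = v \<or>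
    src (edge_between u v) = v \<and> tgt (edge_between u v) = u)"
  using assms unfolding edge_between_def mg_adj_def by (rule someI_ex[OF bexE]) blast

text \<open>The parameter of an interior point \<open>Ed e t\<close> is measured from \<open>src e\<close>, so it is flipped
  when \<open>e\<close> is traversed backwards.\<close>

definition path_point :: "(nat \<Rightarrow> 'v) \<Rightarrow> real \<Rightarrow> ('v, 'e) mgpoint" where
  "path_point f s = (if s = of_int \<lfloor>s\<rfloor> then Vx (f (nat \<lfloor>s\<rfloor>)) else
     (let j = nat \<lfloor>s\<rfloor>; e = edge_between (f j) (f (Suc j)) in
       Ed e (if src e = f j then s - of_int \<lfloor>s\<rfloor> else 1 - (s - of_int \<lfloor>s\<rfloor>))))"

lemma path_point_of_nat [simp]: "path_point f (real i) = Vx (f i)"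
  unfolding path_point_def by simp

lemma path_point_0 [simp]: "path_point f 0 = Vx (f 0)"
  using path_point_of_nat[of f 0] by simp

lemma path_point_Ed:
  assumes sp: "shortest_path f n" and s: "0 \<le> s" "s \<le> real n" "s \<noteq> of_int \<lfloor>s\<rfloor>"
  defines "j \<equiv> nat \<lfloor>s\<rfloor>"
  defines "e \<equiv> edge_between (f j) (f (Suc j))"
  shows "j < n" and "\<lceil>s\<rceil> = \<lfloor>s\<rfloor> + 1" and "e \<in> E"
    and "src e = f j \<and> tgt e = f (Suc j) \<or> src e = f (Suc j) \<and> tgt e = f j"
    and "path_point f s = Ed e (if src e = f j then s - of_int \<lfloor>s\<rfloor> else 1 - (s - of_int \<lfloor>s\<rfloor>))"
proof -
  show "\<lceil>s\<rceil> = \<lfloor>s\<rfloor> + 1" using s(3) ceiling_altdef by metis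
  have "of_int \<lfloor>s\<rfloor> < s" using s(3) of_int_floor_le[of s] by linarith
  then show "j < n" unfolding j_def using s(1,2) by linarith
  then have "adj (f j) (f (Suc j))" by (rule shortest_path_adj[OF sp])
  then show "e \<in> E" "src e = f j \<and> tgt e = f (Suc j) \<or> src e = f (Suc j) \<and> tgt e = f j"
    using edge_between unfolding e_def by blast+
  show "path_point f s = Ed e (if src e = f j then s - of_int \<lfloor>s\<rfloor> else 1 - (s - of_int \<lfloor>s\<rfloor>))"
    using s(3) unfolding path_point_def j_def e_def Let_def by simp
qed

lemma mg_ends_path_point:
  assumes sp: "shortest_path f n" and s: "0 \<le> s" "s \<le> real n"
  shows "ends (path_point f s) =
    {(f (nat \<lfloor>s\<rfloor>), s - of_int \<lfloor>s\<rfloor>), (f (nat \<lceil>s\<rceil>), of_int \<lceil>s\<rceil> - s)}"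
proof (cases "s = of_int \<lfloor>s\<rfloor>")
  case True
  then have "\<lceil>s\<rceil> = \<lfloor>s\<rfloor>" using ceiling_altdef by metis
  then show ?thesis using True unfolding path_point_def by simp
next
  case False
  note e = path_point_Ed[OF sp s False]
  have "nat \<lceil>s\<rceil> = Suc (nat \<lfloor>s\<rfloor>)" "of_int \<lceil>s\<rceil> - s = 1 - (s - of_int \<lfloor>s\<rfloor>)"
    using e(2) s(1) by (simp_all add: nat_add_distrib)
  then show ?thesis unfolding e(5) using e(4) by auto
qed

lemma path_point_in_points:
  assumes sp: "shortest_path f n" and s: "0 \<le> s" "s \<le> real n"
  shows "path_point f s \<in> points"
proof (cases "s = of_int \<lfloor>s\<rfloor>")
  case True
  then show ?thesis using shortest_path_in_V[OF sp floor_ceiling_nat_bounds(1)[OF s]]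
    unfolding path_point_def mg_points_def by simp
next
  case False
  have "0 < s - of_int \<lfloor>s\<rfloor>" "s - of_int \<lfloor>s\<rfloor> < 1"
    using False of_int_floor_le[of s] by linarith+
  then show ?thesis using path_point_Ed[OF sp s False] unfolding mg_points_def by auto
qed

lemma mg_ends_path_point_index:
  assumes sp: "shortest_path f n" and s: "0 \<le> s" "s \<le> real n"
    and pa: "(p, a) \<in> ends (path_point f s)"
  obtains i where "i \<le> n" "p = f i" "a = \<bar>s - real i\<bar>"
proof -
  note bounds = floor_ceiling_nat_bounds[OF s]
  from pa consider "p = f (nat \<lfloor>s\<rfloor>)" "a = s - of_int \<lfloor>s\<rfloor>"
    | "p = f (nat \<lceil>s\<rceil>)" "a = of_int \<lceil>s\<rceil> - s"
    unfolding mg_ends_path_point[OF sp s] by blast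
  then show thesis
  proof cases
    case 1
    then show thesis using that[OF bounds(1)] bounds(3) by simp
  next
    case 2
    then show thesis using that[OF bounds(2)] bounds(4) by simp
  qed
qed

lemma same_edge_path_point:
  assumes sp: "shortest_path f n" and s: "0 \<le> s" "s \<le> real n" and t: "0 \<le> t" "t \<le> real n"
  shows "mg_same_edge (path_point f s) (path_point f t) \<subseteq> {\<bar>s - t\<bar>}"
proof (cases "s = of_int \<lfloor>s\<rfloor> \<or> t = of_int \<lfloor>t\<rfloor>")
  case True
  then show ?thesis
    by (cases "path_point f s"; cases "path_point f t") (auto simp: path_point_def split: if_splits)
next
  case False
  then have s': "s \<noteq> of_int \<lfloor>s\<rfloor>" and t': "t \<noteq> of_int \<lfloor>t\<rfloor>" by auto
  note es = path_point_Ed[OF sp s s'] and et = path_point_Ed[OF sp t t']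
  let ?j = "nat \<lfloor>s\<rfloor>" and ?k = "nat \<lfloor>t\<rfloor>"
  show ?thesis
  proof (cases "edge_between (f ?j) (f (Suc ?j)) = edge_between (f ?k) (f (Suc ?k))")
    case same: True
    have "{f ?j, f (Suc ?j)} = {f ?k, f (Suc ?k)}" using es(4) et(4) same by auto
    moreover have "\<And>a b. a \<le> n \<Longrightarrow> b \<le> n \<Longrightarrow> f a = f b \<Longrightarrow> a = b"
      using shortest_path_inj[OF sp] by blast
    ultimately have "?j = ?k \<or> ?j = Suc ?k" "Suc ?j = ?k \<or> ?j = ?k"
      using es(1) et(1) by (auto simp: doubleton_eq_iff)
    then have "?j = ?k" by linarith
    then have "\<lfloor>s\<rfloor> = \<lfloor>t\<rfloor>" using s(1) t(1) by (metis eq_nat_nat_iff zero_le_floor)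
    then show ?thesis unfolding es(5) et(5) using same by (auto simp: abs_if)
  qed (simp add: es(5) et(5))
qed

lemma pdist_path_point_ge:
  assumes sp: "shortest_path f n" and s: "0 \<le> s" "s \<le> real n" and t: "0 \<le> t" "t \<le> real n"
  shows "\<bar>s - t\<bar> \<le> pdist (path_point f s) (path_point f t)"
proof (cases rule: mg_dist_cases[where E = E and src = src and tgt = tgt
      and x = "path_point f s" and y = "path_point f t"])
  case (1 p a q b)
  obtain i where i: "i \<le> n" "p = f i" "a = \<bar>s - real i\<bar>"
    using mg_ends_path_point_index[OF sp s 1(1)] .
  obtain k where k: "k \<le> n" "q = f k" "b = \<bar>t - real k\<bar>"
    using mg_ends_path_point_index[OF sp t 1(2)] .
  have "real (vdist p q) = \<bar>real i - real k\<bar>"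
    using shortest_path_vdist_abs[OF sp i(1) k(1)] i k by simp
  then show ?thesis using 1(3) i k by linarith
next
  case 2
  then show ?thesis using same_edge_path_point[OF sp s t] by auto
qed

lemma pdist_path_point_le:
  assumes sp: "shortest_path f n" and s: "0 \<le> s" "s \<le> real n" and t: "0 \<le> t" "t \<le> real n"
  shows "pdist (path_point f s) (path_point f t) \<le> \<bar>s - t\<bar>"
proof -
  note bs = floor_ceiling_nat_bounds[OF s] and bt = floor_ceiling_nat_bounds[OF t]
  have ends_s: "(f (nat \<lfloor>s\<rfloor>), s - of_int \<lfloor>s\<rfloor>) \<in> ends (path_point f s)"
      "(f (nat \<lceil>s\<rceil>), of_int \<lceil>s\<rceil> - s) \<in> ends (path_point f s)"
    using mg_ends_path_point[OF sp s] by auto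
  have ends_t: "(f (nat \<lfloor>t\<rfloor>), t - of_int \<lfloor>t\<rfloor>) \<in> ends (path_point f t)"
      "(f (nat \<lceil>t\<rceil>), of_int \<lceil>t\<rceil> - t) \<in> ends (path_point f t)"
    using mg_ends_path_point[OF sp t] by auto
  have via: "pdist (path_point f s) (path_point f t) \<le> a + \<bar>real i - real k\<bar> + b"
    if "i \<le> n" "k \<le> n" "(f i, a) \<in> ends (path_point f s)" "(f k, b) \<in> ends (path_point f t)"
    for i k a b
    using mg_dist_le_via_ends[OF that(3,4), of E] shortest_path_vdist_abs[OF sp that(1,2)] by simp
  have "\<lceil>s\<rceil> \<le> \<lfloor>t\<rfloor> \<or> \<lceil>t\<rceil> \<le> \<lfloor>s\<rfloor> \<or> \<lfloor>s\<rfloor> = \<lfloor>t\<rfloor> \<and> s \<noteq> of_int \<lfloor>s\<rfloor> \<and> t \<noteq> of_int \<lfloor>t\<rfloor>"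
    using ceiling_altdef[of s] ceiling_altdef[of t]
    by (cases "s = of_int \<lfloor>s\<rfloor>"; cases "t = of_int \<lfloor>t\<rfloor>") auto
  then consider (before) "\<lceil>s\<rceil> \<le> \<lfloor>t\<rfloor>" | (after) "\<lceil>t\<rceil> \<le> \<lfloor>s\<rfloor>"
    | (same_edge) "\<lfloor>s\<rfloor> = \<lfloor>t\<rfloor>" "s \<noteq> of_int \<lfloor>s\<rfloor>" "t \<noteq> of_int \<lfloor>t\<rfloor>"
    by blast
  then show ?thesis
  proof cases
    case before
    then have "\<bar>real (nat \<lceil>s\<rceil>) - real (nat \<lfloor>t\<rfloor>)\<bar> = of_int \<lfloor>t\<rfloor> - of_int \<lceil>s\<rceil>"
      using bs(4) bt(3) by simp
    then show ?thesis using via[OF bs(2) bt(1) ends_s(2) ends_t(1)] before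
      le_of_int_ceiling[of s] of_int_floor_le[of t] by linarith
  next
    case after
    then have "\<bar>real (nat \<lfloor>s\<rfloor>) - real (nat \<lceil>t\<rceil>)\<bar> = of_int \<lfloor>s\<rfloor> - of_int \<lceil>t\<rceil>"
      using bs(3) bt(4) by simp
    then show ?thesis using via[OF bs(1) bt(2) ends_s(1) ends_t(2)] after
      le_of_int_ceiling[of t] of_int_floor_le[of s] by linarith
  next
    case same_edge
    have "\<bar>s - t\<bar> \<in> mg_same_edge (path_point f s) (path_point f t)"
      unfolding path_point_Ed(5)[OF sp s same_edge(2)] path_point_Ed(5)[OF sp t same_edge(3)]
        same_edge(1)
      by (auto simp: abs_if)
    then show ?thesis by (rule mg_dist_le_same_edge)
  qed
qed

lemma pdist_path_point:
  "shortest_path f n \<Longrightarrow> 0 \<le> s \<Longrightarrow> s \<le> real n \<Longrightarrow> 0 \<le> t \<Longrightarrow> t \<le> real n \<Longrightarrow>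
    pdist (path_point f s) (path_point f t) = \<bar>s - t\<bar>"
  by (rule antisym[OF pdist_path_point_le pdist_path_point_ge])

lemma geodesic_path_point:
  assumes "shortest_path f n" shows "geodesic (path_point f) (real n)"
  unfolding mg_geodesic_def
  using path_point_in_points[OF assms] pdist_path_point[OF assms] by auto

lemma ends_in_V: "x \<in> points \<Longrightarrow> (p, a) \<in> ends x \<Longrightarrow> p \<in> V \<and> 0 \<le> a \<and> a \<le> 1"
  unfolding mg_points_def using src_in_V tgt_in_V by (cases x) auto

lemma vdist_edge_ends_le:
  assumes "e \<in> E" "p \<in> {src e, tgt e}" "q \<in> {src e, tgt e}"
  shows "vdist p q \<le> 1"
proof -
  have "p = q \<or> adj p q" using assms unfolding mg_adj_def by auto
  then show ?thesis using mg_vdist_adj_le by fastforce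
qed

lemma vdist_ends_le:
  assumes "x \<in> points" "(p, a) \<in> ends x" "(q, b) \<in> ends x"
  shows "vdist p q \<le> 1"
  using assms vdist_edge_ends_le unfolding mg_points_def by (cases x) auto

lemma pdist_le_vdist_ends:
  assumes "x \<in> points" "y \<in> points" "(p, a) \<in> ends x" "(q, b) \<in> ends y"
  shows "pdist x y \<le> real (vdist p q) + 2"
  using mg_dist_le_via_ends[OF assms(3,4), of E] ends_in_V[OF assms(1,3)] ends_in_V[OF assms(2,4)]
  by linarith

lemma vdist_ends_le_pdist:
  assumes x: "x \<in> points" and y: "y \<in> points" and p: "(p, a) \<in> ends x" and q: "(q, b) \<in> ends y"
  shows "real (vdist p q) \<le> pdist x y + 2"
proof (cases rule: mg_dist_cases[where E = E and src = src and tgt = tgt and x = x and y = y])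
  case (1 p' a' q' b')
  have in_V: "p \<in> V" "q \<in> V" "p' \<in> V" "q' \<in> V" "0 \<le> a'" "0 \<le> b'"
    using ends_in_V x y p q 1(1,2) by blast+
  have "vdist p q \<le> vdist p p' + vdist p' q' + vdist q' q"
    using vdist_triangle[of p p' q] vdist_triangle[of p' q' q] in_V by linarith
  moreover have "vdist p p' \<le> 1" "vdist q' q \<le> 1"
    using vdist_ends_le x y p q 1(1,2) by blast+
  ultimately show ?thesis using 1(3) in_V by linarith
next
  case 2
  then obtain e s t where "x = Ed e s" "y = Ed e t" "pdist x y = \<bar>s - t\<bar>"
    by (cases x; cases y) (auto split: if_splits)
  moreover from this have "e \<in> E" using x unfolding mg_points_def by auto
  ultimately have "vdist p q \<le> 1" using vdist_edge_ends_le p q by auto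
  then show ?thesis using 2 \<open>pdist x y = \<bar>s - t\<bar>\<close> by linarith
qed

lemma mem_nbhd_iff: "x \<in> nbhd r S \<longleftrightarrow> x \<in> points \<and> (\<exists>y\<in>S. pdist x y \<le> r)"
  unfolding mg_nbhd_def by simp

lemma Vx_in_path_point_image: "i \<le> n \<Longrightarrow> Vx (f i) \<in> path_point f ` {0..real n}"
  by (intro image_eqI[of _ _ "real i"]) auto

lemma vertex_near_path_point_image:
  assumes sp: "shortest_path f n" and x: "x \<in> V" and y: "y \<in> path_point f ` {0..real n}"
  shows "\<exists>q\<in>f ` {..n}. real (vdist x q) \<le> pdist (Vx x) y + 2"
proof -
  obtain s where s: "0 \<le> s" "s \<le> real n" "y = path_point f s" using y by auto
  have "(f (nat \<lfloor>s\<rfloor>), s - of_int \<lfloor>s\<rfloor>) \<in> ends y" using mg_ends_path_point[OF sp s(1,2)] s(3) by simp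
  moreover have "Vx x \<in> points" using x unfolding mg_points_def by simp
  moreover have "(x, 0) \<in> ends (Vx x)" by simp
  ultimately have "real (vdist x (f (nat \<lfloor>s\<rfloor>))) \<le> pdist (Vx x) y + 2"
    using vdist_ends_le_pdist path_point_in_points[OF sp s(1,2)] s(3) by blast
  then show ?thesis using floor_ceiling_nat_bounds(1)[OF s(1,2)] by blast
qed

definition geodesic_vertices :: "'v \<Rightarrow> 'v \<Rightarrow> 'v set \<Rightarrow> bool" where
  "geodesic_vertices u v S \<longleftrightarrow> (\<exists>f n. shortest_path f n \<and> f 0 = u \<and> f n = v \<and> S = f ` {..n})"

lemma geodesic_verticesE:
  assumes "geodesic_vertices u v S"
  obtains f n where "shortest_path f n" "f 0 = u" "f n = v" "S = f ` {..n}"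
  using assms unfolding geodesic_vertices_def by blast

lemma geodesic_vertices_exists: "u \<in> V \<Longrightarrow> v \<in> V \<Longrightarrow> \<exists>S. geodesic_vertices u v S"
  unfolding geodesic_vertices_def by (metis shortest_path_exists)

lemma geodesic_vertices_subset:
  assumes "geodesic_vertices u v S"
  shows "S \<subseteq> V" "u \<in> S" "v \<in> S"
proof -
  obtain f n where f: "shortest_path f n" "f 0 = u" "f n = v" "S = f ` {..n}"
    using assms by (rule geodesic_verticesE)
  show "S \<subseteq> V" using shortest_path_in_V[OF f(1)] f(4) by blast
  show "u \<in> S" "v \<in> S" using f(2-4) by force+
qed

lemma geodesic_vertices_sym:
  assumes "geodesic_vertices u v S"
  shows "geodesic_vertices v u S"
proof -
  obtain f n where f: "shortest_path f n" "f 0 = u" "f n = v" "S = f ` {..n}"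
    using assms by (rule geodesic_verticesE)
  have "(\<lambda>i. f (n - i)) ` {..n} = f ` {..n}"
  proof
    show "f ` {..n} \<subseteq> (\<lambda>i. f (n - i)) ` {..n}"
    proof
      fix x assume "x \<in> f ` {..n}"
      then obtain i where "i \<le> n" "x = f i" by auto
      then show "x \<in> (\<lambda>i. f (n - i)) ` {..n}" by (intro image_eqI[of _ _ "n - i"]) auto
    qed
  qed auto
  then show ?thesis
    unfolding geodesic_vertices_def using shortest_path_rev[OF f(1)] f by (intro exI) auto
qed

lemma geodesic_vertices_vdist:
  assumes "geodesic_vertices u v S" "p \<in> S"
  shows "vdist u p + vdist p v = vdist u v"
proof -
  obtain f n where f: "shortest_path f n" "f 0 = u" "f n = v" "S = f ` {..n}"
    using assms(1) by (rule geodesic_verticesE)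
  obtain i where "i \<le> n" "p = f i" using assms(2) f(4) by auto
  then show ?thesis
    using shortest_path_vdist[OF f(1)] f(2,3)
    by (metis diff_zero le0 order.refl le_add_diff_inverse)
qed

text \<open>A discrete intermediate value property.\<close>

lemma geodesic_vertices_crossing:
  assumes S: "geodesic_vertices u v S" and "P u" "R v" and cover: "\<forall>x\<in>S. P x \<or> R x"
  shows "\<exists>x\<in>S. P x \<and> (\<exists>y\<in>S. R y \<and> vdist x y \<le> 1)"
proof (rule ccontr)
  assume no_crossing: "\<not> ?thesis"
  obtain f n where f: "shortest_path f n" "f 0 = u" "f n = v" "S = f ` {..n}"
    using S by (rule geodesic_verticesE)
  have "P (f k)" if "k \<le> n" for k
    using that
  proof (induction k)
    case (Suc k)
    have "vdist (f k) (f (Suc k)) \<le> 1"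
      using mg_vdist_adj_le[OF shortest_path_adj[OF f(1)]] Suc.prems by simp
    moreover have "f k \<in> S" "f (Suc k) \<in> S" using f(4) Suc.prems by auto
    ultimately show ?case using no_crossing cover Suc by auto
  qed (use \<open>P u\<close> f(2) in simp)
  then have "P v" using f(3) by blast
  then show False using no_crossing \<open>R v\<close> geodesic_vertices_subset(3)[OF S] by fastforce
qed

lemma geodesic_triangle_vertices_thin:
  assumes thin: "\<forall>\<alpha> La \<beta> Lb \<gamma> Lc. geodesic \<alpha> La \<and> geodesic \<beta> Lb \<and> geodesic \<gamma> Lc \<and>
        \<alpha> La = \<beta> 0 \<and> \<beta> Lb = \<gamma> 0 \<and> \<gamma> Lc = \<alpha> 0 \<longrightarrow>
        \<alpha> ` {0..La} \<subseteq> nbhd \<delta> (\<beta> ` {0..Lb} \<union> \<gamma> ` {0..Lc})"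
    and S1: "geodesic_vertices u v S1" and S2: "geodesic_vertices v w S2"
    and S3: "geodesic_vertices w u S3" and p: "p \<in> S1"
  shows "\<exists>q\<in>S2 \<union> S3. real (vdist p q) \<le> \<delta> + 2"
proof -
  obtain f1 n1 where f1: "shortest_path f1 n1" "f1 0 = u" "f1 n1 = v" "S1 = f1 ` {..n1}"
    using S1 by (rule geodesic_verticesE)
  obtain f2 n2 where f2: "shortest_path f2 n2" "f2 0 = v" "f2 n2 = w" "S2 = f2 ` {..n2}"
    using S2 by (rule geodesic_verticesE)
  obtain f3 n3 where f3: "shortest_path f3 n3" "f3 0 = w" "f3 n3 = u" "S3 = f3 ` {..n3}"
    using S3 by (rule geodesic_verticesE)
  obtain i where i: "i \<le> n1" "p = f1 i" using p f1(4) by auto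
  have "path_point f1 (real n1) = path_point f2 0" "path_point f2 (real n2) = path_point f3 0"
    "path_point f3 (real n3) = path_point f1 0"
    using f1(2,3) f2(2,3) f3(2,3) by simp_all
  then have "path_point f1 ` {0..real n1} \<subseteq>
      nbhd \<delta> (path_point f2 ` {0..real n2} \<union> path_point f3 ` {0..real n3})"
    using geodesic_path_point[OF f1(1)] geodesic_path_point[OF f2(1)] geodesic_path_point[OF f3(1)]
    by (intro thin[rule_format]) simp
  then have "Vx p \<in> nbhd \<delta> (path_point f2 ` {0..real n2} \<union> path_point f3 ` {0..real n3})"
    unfolding i(2) using Vx_in_path_point_image[OF i(1)] by (rule subsetD)
  then obtain y where y: "y \<in> path_point f2 ` {0..real n2} \<union> path_point f3 ` {0..real n3}"
      "pdist (Vx p) y \<le> \<delta>"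
    unfolding mem_nbhd_iff by blast
  have p_V: "p \<in> V" using i shortest_path_in_V[OF f1(1)] by blast
  from y(1) show ?thesis
  proof
    assume "y \<in> path_point f2 ` {0..real n2}"
    then obtain q where "q \<in> S2" "real (vdist p q) \<le> pdist (Vx p) y + 2"
      using vertex_near_path_point_image[OF f2(1) p_V] f2(4) by blast
    then show ?thesis using y(2) by (intro bexI[of _ q]) auto
  next
    assume "y \<in> path_point f3 ` {0..real n3}"
    then obtain q where "q \<in> S3" "real (vdist p q) \<le> pdist (Vx p) y + 2"
      using vertex_near_path_point_image[OF f3(1) p_V] f3(4) by blast
    then show ?thesis using y(2) by (intro bexI[of _ q]) auto
  qed
qed

lemma geodesic_vertices_quasiconvex:
  assumes qc: "\<forall>\<alpha> L. geodesic \<alpha> L \<and> \<alpha> 0 \<in> Vx ` W \<and> \<alpha> L \<in> Vx ` W \<longrightarrow>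
        \<alpha> ` {0..L} \<subseteq> nbhd C (Vx ` W)"
    and S: "geodesic_vertices u v S" and "u \<in> W" "v \<in> W" and p: "p \<in> S"
  shows "\<exists>w\<in>W. real (vdist p w) \<le> C"
proof -
  obtain f n where f: "shortest_path f n" "f 0 = u" "f n = v" "S = f ` {..n}"
    using S by (rule geodesic_verticesE)
  obtain i where i: "i \<le> n" "p = f i" using p f(4) by auto
  have "path_point f ` {0..real n} \<subseteq> nbhd C (Vx ` W)"
    using qc geodesic_path_point[OF f(1)] f(2,3) \<open>u \<in> W\<close> \<open>v \<in> W\<close> by simp
  then have "Vx p \<in> nbhd C (Vx ` W)"
    unfolding i(2) using Vx_in_path_point_image[OF i(1)] by (rule subsetD)
  then show ?thesis unfolding mem_nbhd_iff by auto
qed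

lemma geodesic_length_eq:
  assumes "geodesic \<alpha> La" "geodesic \<beta> Lb" "\<alpha> 0 = \<beta> 0" "\<alpha> La = \<beta> Lb"
  shows "La = Lb"
proof -
  have "0 \<le> La" "0 \<le> Lb" using assms(1,2) unfolding mg_geodesic_def by auto
  then have "La = pdist (\<alpha> 0) (\<alpha> La)" "Lb = pdist (\<beta> 0) (\<beta> Lb)"
    using assms(1,2) unfolding mg_geodesic_def by auto
  then show ?thesis using assms(3,4) by simp
qed

text \<open>With \<open>x = \<alpha> t\<close>, \<open>x' = \<beta> t\<close> and the common endpoints \<open>y\<close>, \<open>z\<close>, both sums on the right of the
  four-point condition for \<open>x, x', z, y\<close> are about \<open>La\<close>, and so is \<open>d(z, y)\<close>; hence \<open>d(x, x')\<close> is
  bounded.  Passing between points and nearby vertices costs the additive constants.\<close>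

lemma geodesic_bigon_close:
  assumes four_point: "\<And>x y z t. x \<in> V \<Longrightarrow> y \<in> V \<Longrightarrow> z \<in> V \<Longrightarrow> t \<in> V \<Longrightarrow>
      real (vdist x y) + real (vdist z t)
        \<le> max (real (vdist x z) + real (vdist y t)) (real (vdist x t) + real (vdist y z)) + K"
    and \<alpha>: "geodesic \<alpha> La" and \<beta>: "geodesic \<beta> Lb" and ends: "\<alpha> 0 = \<beta> 0" "\<alpha> La = \<beta> Lb"
    and t: "t \<in> {0..La}"
  shows "pdist (\<alpha> t) (\<beta> t) \<le> K + 8"
proof -
  have L: "La = Lb" using geodesic_length_eq[OF \<alpha> \<beta> ends] .
  have range: "0 \<in> {0..La}" "La \<in> {0..La}" "t \<in> {0..Lb}" "0 \<in> {0..Lb}" "Lb \<in> {0..Lb}"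
    using t L by auto
  have pts: "\<And>s. s \<in> {0..La} \<Longrightarrow> \<alpha> s \<in> points" "\<And>s. s \<in> {0..Lb} \<Longrightarrow> \<beta> s \<in> points"
    using \<alpha> \<beta> unfolding mg_geodesic_def by blast+
  have d\<alpha>: "\<And>s u. s \<in> {0..La} \<Longrightarrow> u \<in> {0..La} \<Longrightarrow> pdist (\<alpha> s) (\<alpha> u) = \<bar>s - u\<bar>"
    and d\<beta>: "\<And>s u. s \<in> {0..Lb} \<Longrightarrow> u \<in> {0..Lb} \<Longrightarrow> pdist (\<beta> s) (\<beta> u) = \<bar>s - u\<bar>"
    using \<alpha> \<beta> unfolding mg_geodesic_def by blast+
  obtain x a x' a' y b z c where
    e: "(x, a) \<in> ends (\<alpha> t)" "(x', a') \<in> ends (\<beta> t)" "(y, b) \<in> ends (\<alpha> 0)" "(z, c) \<in> ends (\<alpha> La)"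
    by (meson mg_ends_nonempty)
  have V: "x \<in> V" "x' \<in> V" "y \<in> V" "z \<in> V"
    using ends_in_V e pts t range by blast+
  have "pdist (\<alpha> t) (\<beta> t) \<le> real (vdist x x') + 2"
    using pdist_le_vdist_ends[OF pts(1)[OF t] pts(2)[OF range(3)] e(1,2)] .
  moreover have "La \<le> real (vdist z y) + 2"
    using pdist_le_vdist_ends[OF pts(1)[OF range(2)] pts(1)[OF range(1)] e(4,3)] d\<alpha> range by simp
  moreover have "real (vdist x z) \<le> La - t + 2" "real (vdist x y) \<le> t + 2"
    using vdist_ends_le_pdist[OF pts(1)[OF t] pts(1)[OF range(2)] e(1,4)]
      vdist_ends_le_pdist[OF pts(1)[OF t] pts(1)[OF range(1)] e(1,3)] d\<alpha> t range by auto
  moreover have "real (vdist x' y) \<le> t + 2" "real (vdist x' z) \<le> La - t + 2"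
    using vdist_ends_le_pdist[OF pts(2)[OF range(3)] pts(1)[OF range(1)] e(2,3)]
      vdist_ends_le_pdist[OF pts(2)[OF range(3)] pts(1)[OF range(2)] e(2,4)] d\<beta> ends L t range
    by auto
  ultimately have "max (real (vdist x z) + real (vdist x' y)) (real (vdist x y) + real (vdist x' z))
      \<le> real (vdist z y) + 6" and "pdist (\<alpha> t) (\<beta> t) \<le> real (vdist x x') + 2"
    by linarith+
  then show ?thesis using four_point[OF V(1,2,4,3)] by linarith
qed

lemma geodesic_bigon_thin:
  assumes four_point: "\<And>x y z t. x \<in> V \<Longrightarrow> y \<in> V \<Longrightarrow> z \<in> V \<Longrightarrow> t \<in> V \<Longrightarrow>
      real (vdist x y) + real (vdist z t)
        \<le> max (real (vdist x z) + real (vdist y t)) (real (vdist x t) + real (vdist y z)) + K"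
    and \<alpha>: "geodesic \<alpha> La" and \<beta>: "geodesic \<beta> Lb" and ends: "\<alpha> 0 = \<beta> 0" "\<alpha> La = \<beta> Lb"
  shows "\<alpha> ` {0..La} \<subseteq> nbhd (K + 8) (\<beta> ` {0..Lb})"
proof
  fix x assume "x \<in> \<alpha> ` {0..La}"
  then obtain t where t: "t \<in> {0..La}" "x = \<alpha> t" by blast
  then have "x \<in> points" "\<beta> t \<in> \<beta> ` {0..Lb}"
    using \<alpha> geodesic_length_eq[OF \<alpha> \<beta> ends] unfolding mg_geodesic_def by auto
  then show "x \<in> nbhd (K + 8) (\<beta> ` {0..Lb})"
    unfolding mem_nbhd_iff using geodesic_bigon_close[OF four_point \<alpha> \<beta> ends t(1)] t(2) by blast
qed

end

section \<open>Gromov products and the four-point condition\<close>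

definition gromov_product :: "('v \<Rightarrow> 'v \<Rightarrow> real) \<Rightarrow> 'v \<Rightarrow> 'v \<Rightarrow> 'v \<Rightarrow> real" where
  "gromov_product d w x y = (d x w + d y w - d x y) / 2"

text \<open>Hyperbolicity at a single base point \<open>w\<close> already gives the four-point condition, because
  the distances to \<open>w\<close> cancel out of the sums of Gromov products involved.\<close>

lemma four_point_of_gromov_product:
  fixes d :: "'v \<Rightarrow> 'v \<Rightarrow> real"
  assumes sym: "\<And>x y. x \<in> S \<Longrightarrow> y \<in> S \<Longrightarrow> d x y = d y x"
    and hyp: "\<And>x y z. x \<in> S \<Longrightarrow> y \<in> S \<Longrightarrow> z \<in> S \<Longrightarrow>
      min (gromov_product d w x z) (gromov_product d w z y) - K \<le> gromov_product d w x y"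
    and S: "x \<in> S" "y \<in> S" "z \<in> S" "t \<in> S"
  shows "d x y + d z t \<le> max (d x z + d y t) (d x t + d y z) + 4 * K"
proof -
  let ?g = "gromov_product d w"
  have g_sym: "?g a b = ?g b a" if "a \<in> S" "b \<in> S" for a b
    using sym[OF that] unfolding gromov_product_def by simp
  have "min (?g x t) (?g t y) - K \<le> ?g x y" "min (?g x z) (?g z y) - K \<le> ?g x y"
    "min (?g z x) (?g x t) - K \<le> ?g z t" "min (?g z y) (?g y t) - K \<le> ?g z t"
    using hyp S by blast+
  then have "min (?g x z + ?g y t) (?g x t + ?g y z) - 2 * K \<le> ?g x y + ?g z t"
    using g_sym[of t y] g_sym[of z x] g_sym[of z y] S unfolding min_def by (smt (verit))
  moreover have "min (?g x z + ?g y t) (?g x t + ?g y z) =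
      (d x w + d y w + d z w + d t w - max (d x z + d y t) (d x t + d y z)) / 2"
    unfolding gromov_product_def min_def max_def by (simp add: field_simps)
  moreover have "?g x y + ?g z t = (d x w + d y w + d z w + d t w - (d x y + d z t)) / 2"
    unfolding gromov_product_def by (simp add: field_simps)
  ultimately show ?thesis by (simp add: field_simps)
qed

section \<open>Cayley graphs and relative Cayley graphs\<close>

lemma rcg_adj_iff:
  "mg_adj (rcg_E G H A) rcg_src (rcg_tgt G \<pi>) U W \<longleftrightarrow>
    (\<exists>C\<in>rcosets\<^bsub>G\<^esub> H. \<exists>x\<in>A. U = C \<and> W = C #>\<^bsub>G\<^esub> \<pi> x \<or> W = C \<and> U = C #>\<^bsub>G\<^esub> \<pi> x)"
  unfolding mg_adj_def rcg_E_def rcg_src_def rcg_tgt_def by auto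

context group
begin

lemma rcg_adj_r_coset:
  assumes "subgroup H G" "\<pi> ` A \<subseteq> carrier G" "g \<in> carrier G" "x \<in> A"
  shows "mg_adj (rcg_E G H A) rcg_src (rcg_tgt G \<pi>) (H #> g) (H #> (g \<otimes> \<pi> x))"
proof -
  have "H #> g \<in> rcosets H" using rcosetsI[OF subgroup.subset[OF assms(1)] assms(3)] .
  moreover have "H #> (g \<otimes> \<pi> x) = (H #> g) #> \<pi> x"
    using coset_mult_assoc[OF subgroup.subset[OF assms(1)] assms(3), of "\<pi> x"] assms(2,4) by auto
  ultimately show ?thesis unfolding rcg_adj_iff using assms(4) by auto
qed

lemma rcg_reach_generate:
  assumes H: "subgroup H G" and gens: "\<pi> ` A \<subseteq> carrier G"
    and "g \<in> generate G (\<pi> ` A)" "a \<in> carrier G"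
  shows "\<exists>n. (mg_adj (rcg_E G H A) rcg_src (rcg_tgt G \<pi>) ^^ n) (H #> a) (H #> (a \<otimes> g))"
  using assms(3,4)
proof (induction g arbitrary: a rule: generate.induct)
  case one
  then have "(mg_adj (rcg_E G H A) rcg_src (rcg_tgt G \<pi>) ^^ 0) (H #> a) (H #> (a \<otimes> \<one>))" by simp
  then show ?case by blast
next
  case (incl h)
  then obtain x where "x \<in> A" "h = \<pi> x" by blast
  then have "mg_adj (rcg_E G H A) rcg_src (rcg_tgt G \<pi>) (H #> a) (H #> (a \<otimes> h))"
    using rcg_adj_r_coset[OF H gens incl.prems] by simp
  then have "(mg_adj (rcg_E G H A) rcg_src (rcg_tgt G \<pi>) ^^ 1) (H #> a) (H #> (a \<otimes> h))"
    by (simp only: relpowp_1)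
  then show ?case by blast
next
  case (inv h)
  then obtain x where x: "x \<in> A" "h = \<pi> x" by blast
  then have h: "h \<in> carrier G" using gens by blast
  have "a \<otimes> inv h \<otimes> \<pi> x = a" using inv.prems h x(2) by (simp add: m_assoc)
  then have "mg_adj (rcg_E G H A) rcg_src (rcg_tgt G \<pi>) (H #> (a \<otimes> inv h)) (H #> a)"
    using rcg_adj_r_coset[OF H gens _ x(1), of "a \<otimes> inv h"] inv.prems h by simp
  then have "(mg_adj (rcg_E G H A) rcg_src (rcg_tgt G \<pi>) ^^ 1) (H #> a) (H #> (a \<otimes> inv h))"
    using mg_adj_sym by (simp only: relpowp_1)
  then show ?case by blast
next
  case (eng h1 h2)
  have h: "h1 \<in> carrier G" "h2 \<in> carrier G"
    using eng.hyps generate_in_carrier[OF gens] by blast+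
  obtain n1 where "(mg_adj (rcg_E G H A) rcg_src (rcg_tgt G \<pi>) ^^ n1) (H #> a) (H #> (a \<otimes> h1))"
    using eng.IH(1)[OF eng.prems] by blast
  moreover obtain n2 where
    "(mg_adj (rcg_E G H A) rcg_src (rcg_tgt G \<pi>) ^^ n2) (H #> (a \<otimes> h1)) (H #> (a \<otimes> h1 \<otimes> h2))"
    using eng.IH(2) eng.prems h by blast
  ultimately have
    "(mg_adj (rcg_E G H A) rcg_src (rcg_tgt G \<pi>) ^^ (n1 + n2)) (H #> a) (H #> (a \<otimes> h1 \<otimes> h2))"
    by (rule relpowp_trans)
  then show ?case using eng.prems h by (auto simp: m_assoc)
qed

lemma mgraph_rcg:
  assumes marked: "marked_gen_set G A \<pi>" and H: "subgroup H G"
  shows "mgraph (rcg_V G H) (rcg_E G H A) rcg_src (rcg_tgt G \<pi>)"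
proof
  have gens: "\<pi> ` A \<subseteq> carrier G" using marked unfolding marked_gen_set_def by blast
  fix e assume "e \<in> rcg_E G H A"
  then obtain g x where e: "e = (H #> g, x)" "g \<in> carrier G" "x \<in> A"
    unfolding rcg_E_def RCOSETS_def by blast
  show "rcg_src e \<in> rcg_V G H"
    unfolding rcg_V_def rcg_src_def using e rcosetsI[OF subgroup.subset[OF H]] by simp
  have "rcg_tgt G \<pi> e = H #> (g \<otimes> \<pi> x)"
    unfolding rcg_tgt_def using e gens coset_mult_assoc subgroup.subset[OF H] by auto
  then show "rcg_tgt G \<pi> e \<in> rcg_V G H"
    unfolding rcg_V_def using e gens rcosetsI[OF subgroup.subset[OF H]] by auto
next
  have gens: "\<pi> ` A \<subseteq> carrier G" using marked unfolding marked_gen_set_def by blast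
  fix U W assume "U \<in> rcg_V G H" "W \<in> rcg_V G H"
  then obtain a b where ab: "a \<in> carrier G" "b \<in> carrier G" "U = H #> a" "W = H #> b"
    unfolding rcg_V_def RCOSETS_def by blast
  have "inv a \<otimes> b \<in> generate G (\<pi> ` A)" using marked ab unfolding marked_gen_set_def by simp
  moreover have "a \<otimes> (inv a \<otimes> b) = b" using ab by (simp add: m_assoc[symmetric])
  ultimately show "\<exists>n. (mg_adj (rcg_E G H A) rcg_src (rcg_tgt G \<pi>) ^^ n) U W"
    using rcg_reach_generate[OF H gens _ ab(1)] ab(3,4) by metis
qed

end

locale marked_group = group G for G (structure) +
  fixes A :: "'c set" and \<pi> :: "'c \<Rightarrow> 'a"
  assumes marked: "marked_gen_set G A \<pi>"
begin

lemma gens_closed: "\<pi> ` A \<subseteq> carrier G"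
  using marked unfolding marked_gen_set_def by blast

sublocale X: mgraph "rcg_V G {\<one>}" "rcg_E G {\<one>} A" rcg_src "rcg_tgt G \<pi>"
  by (rule mgraph_rcg[OF marked triv_subgroup])

lemma rcosets_trivial: "rcosets {\<one>} = (\<lambda>g. {g}) ` carrier G"
  unfolding RCOSETS_def r_coset_def by auto

lemma singleton_r_coset: "{g} #> x = {g \<otimes> x}"
  unfolding r_coset_def by simp

lemma singleton_in_cayley_V: "g \<in> carrier G \<Longrightarrow> {g} \<in> rcg_V G {\<one>}"
  unfolding rcg_V_def rcosets_trivial by blast

lemma cayley_adj_iff:
  "X.adj U W \<longleftrightarrow> (\<exists>g\<in>carrier G. \<exists>x\<in>A. U = {g} \<and> W = {g \<otimes> \<pi> x} \<or> W = {g} \<and> U = {g \<otimes> \<pi> x})"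
  unfolding rcg_adj_iff rcosets_trivial by (auto simp: singleton_r_coset)

end

locale marked_group_subgroup = marked_group +
  fixes H :: "'a set"
  assumes subgroup: "subgroup H G"
begin

sublocale Y: mgraph "rcg_V G H" "rcg_E G H A" rcg_src "rcg_tgt G \<pi>"
  by (rule mgraph_rcg[OF marked subgroup])

lemma H_carrier: "H \<subseteq> carrier G"
  using subgroup.subset[OF subgroup] .

lemma r_coset_in_rcg_V: "a \<in> carrier G \<Longrightarrow> H #> a \<in> rcg_V G H"
  unfolding rcg_V_def using rcosetsI[OF H_carrier] .

lemma H_in_rcg_V: "H \<in> rcg_V G H"
  using r_coset_in_rcg_V[OF one_closed] coset_mult_one[OF H_carrier] by simp

lemma cayley_adj_project: "X.adj U W \<Longrightarrow> Y.adj (H <#> U) (H <#> W)"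
proof -
  assume "X.adj U W"
  then obtain g x where gx: "g \<in> carrier G" "x \<in> A"
      "U = {g} \<and> W = {g \<otimes> \<pi> x} \<or> W = {g} \<and> U = {g \<otimes> \<pi> x}"
    unfolding cayley_adj_iff by blast
  have "Y.adj (H #> g) (H #> (g \<otimes> \<pi> x))"
    by (rule rcg_adj_r_coset[OF subgroup gens_closed gx(1,2)])
  then show ?thesis using gx(3) mg_adj_sym by (auto simp: r_coset_eq_set_mult[symmetric])
qed

lemma cayley_relpowp_project:
  "(X.adj ^^ n) {a} {b} \<Longrightarrow> (Y.adj ^^ n) (H #> a) (H #> b)"
  using relpowp_map[of X.adj Y.adj "\<lambda>U. H <#> U"] cayley_adj_project
  by (simp add: r_coset_eq_set_mult)

lemma r_coset_mult_left: "h \<in> H \<Longrightarrow> b \<in> carrier G \<Longrightarrow> H #> (h \<otimes> b) = H #> b"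
  using coset_mult_assoc[OF H_carrier, of h b] subgroup.rcos_const[OF subgroup is_group] H_carrier
  by auto

lemma rcg_adj_lift:
  assumes c: "c \<in> carrier G" and adj: "Y.adj (H #> c) U"
  shows "\<exists>b\<in>carrier G. U = H #> b \<and> X.adj {c} {b}"
proof -
  obtain C x where C: "C \<in> rcosets H" and x: "x \<in> A"
    and cases: "H #> c = C \<and> U = C #> \<pi> x \<or> U = C \<and> H #> c = C #> \<pi> x"
    using adj unfolding rcg_adj_iff by blast
  have \<pi>x: "\<pi> x \<in> carrier G" using gens_closed x by blast
  from cases show ?thesis
  proof
    assume "H #> c = C \<and> U = C #> \<pi> x"
    then have "U = H #> (c \<otimes> \<pi> x)" using coset_mult_assoc[OF H_carrier c \<pi>x] by simp
    moreover have "X.adj {c} {c \<otimes> \<pi> x}" unfolding cayley_adj_iff using c x by blast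
    ultimately show ?thesis using c \<pi>x by blast
  next
    assume U: "U = C \<and> H #> c = C #> \<pi> x"
    obtain d where d: "d \<in> carrier G" "C = H #> d" using C unfolding RCOSETS_def by blast
    define b where "b = c \<otimes> inv (\<pi> x)"
    have b: "b \<in> carrier G" unfolding b_def using c \<pi>x by simp
    have "H #> b = (H #> c) #> inv (\<pi> x)"
      unfolding b_def using coset_mult_assoc[OF H_carrier c inv_closed[OF \<pi>x]] by simp
    also have "\<dots> = H #> d"
      using U d coset_mult_assoc[OF H_carrier] \<pi>x by (simp add: m_assoc)
    finally have "U = H #> b" using U d(2) by simp
    moreover have "b \<otimes> \<pi> x = c" unfolding b_def using c \<pi>x by (simp add: m_assoc)
    then have "X.adj {c} {b}" unfolding cayley_adj_iff using b x by blast
    ultimately show ?thesis using b by blast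
  qed
qed

lemma rcg_relpowp_lift:
  assumes a: "a \<in> carrier G" and path: "(Y.adj ^^ n) (H #> a) U"
  shows "\<exists>b\<in>carrier G. U = H #> b \<and> (X.adj ^^ n) {a} {b}"
  using path
proof (induction n arbitrary: U)
  case 0
  then show ?case using a by auto
next
  case (Suc n)
  then obtain W where W: "(Y.adj ^^ n) (H #> a) W" "Y.adj W U" by (auto elim: relpowp_Suc_E)
  then obtain c where c: "c \<in> carrier G" "W = H #> c" "(X.adj ^^ n) {a} {c}"
    using Suc.IH by blast
  then obtain b where "b \<in> carrier G" "U = H #> b" "X.adj {c} {b}"
    using rcg_adj_lift W(2) by blast
  then show ?case using c(3) relpowp_Suc_I by metis
qed

lemma rcg_vdist_le_cayley:
  assumes a: "a \<in> carrier G" and b: "b \<in> carrier G" and h: "h \<in> H"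
  shows "Y.vdist (H #> a) (H #> b) \<le> X.vdist {a} {h \<otimes> b}"
proof -
  have hb: "h \<otimes> b \<in> carrier G" using h b H_carrier by blast
  obtain n where "(X.adj ^^ n) {a} {h \<otimes> b}"
    using X.connected singleton_in_cayley_V a hb by blast
  then have "(X.adj ^^ X.vdist {a} {h \<otimes> b}) {a} {h \<otimes> b}" by (rule mg_vdist_relpowp)
  then have "(Y.adj ^^ X.vdist {a} {h \<otimes> b}) (H #> a) (H #> (h \<otimes> b))"
    by (rule cayley_relpowp_project)
  then show ?thesis unfolding r_coset_mult_left[OF h b] by (rule mg_vdist_le)
qed

lemma rcg_vdist_attained:
  assumes a: "a \<in> carrier G" and b: "b \<in> carrier G"
  obtains b' where "b' \<in> carrier G" "H #> b' = H #> b"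
    "X.vdist {a} {b'} = Y.vdist (H #> a) (H #> b)"
proof -
  obtain n where "(Y.adj ^^ n) (H #> a) (H #> b)"
    using Y.connected r_coset_in_rcg_V a b by blast
  then have "(Y.adj ^^ Y.vdist (H #> a) (H #> b)) (H #> a) (H #> b)" by (rule mg_vdist_relpowp)
  then obtain b' where b': "b' \<in> carrier G" "H #> b = H #> b'"
      "(X.adj ^^ Y.vdist (H #> a) (H #> b)) {a} {b'}"
    using rcg_relpowp_lift[OF a] by blast
  have "X.vdist {a} {b'} \<le> Y.vdist (H #> a) (H #> b)" using b'(3) by (rule mg_vdist_le)
  moreover have "Y.vdist (H #> a) (H #> b) \<le> X.vdist {a} {b'}"
    using rcg_vdist_le_cayley[OF a b'(1) subgroup.one_closed[OF subgroup]] b' by simp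
  ultimately show thesis using that b' by simp
qed

lemma rcg_vdist_H_attained:
  assumes a: "a \<in> carrier G"
  obtains h where "h \<in> H" "X.vdist {a} {h} = Y.vdist (H #> a) H"
proof -
  obtain h where h: "h \<in> carrier G" "H #> h = H #> \<one>" "X.vdist {a} {h} = Y.vdist (H #> a) (H #> \<one>)"
    using rcg_vdist_attained[OF a one_closed] .
  moreover have "h \<in> H" using rcos_self[OF h(1) subgroup] h(2) H_carrier by simp
  ultimately show thesis using that H_carrier by simp
qed

lemma rcg_vdist_H_le: "a \<in> carrier G \<Longrightarrow> h \<in> H \<Longrightarrow> Y.vdist (H #> a) H \<le> X.vdist {a} {h}"
  using rcg_vdist_le_cayley[OF _ one_closed] H_carrier by fastforce

lemma cayley_quasiconvex_vertices:
  assumes qc: "\<forall>\<alpha> L. X.geodesic \<alpha> L \<and> \<alpha> 0 \<in> (\<lambda>h. Vx {h}) ` H \<and> \<alpha> L \<in> (\<lambda>h. Vx {h}) ` H \<longrightarrow>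
      \<alpha> ` {0..L} \<subseteq> X.nbhd C ((\<lambda>h. Vx {h}) ` H)"
    and S: "X.geodesic_vertices {h1} {h2} S" and "h1 \<in> H" "h2 \<in> H" "p \<in> S"
  shows "\<exists>h\<in>H. real (X.vdist p {h}) \<le> C"
proof -
  have qc': "\<forall>\<alpha> L. X.geodesic \<alpha> L \<and> \<alpha> 0 \<in> Vx ` (\<lambda>h. {h}) ` H \<and> \<alpha> L \<in> Vx ` (\<lambda>h. {h}) ` H \<longrightarrow>
      \<alpha> ` {0..L} \<subseteq> X.nbhd C (Vx ` (\<lambda>h. {h}) ` H)"
    using qc by (simp only: image_image)
  have "{h1} \<in> (\<lambda>h. {h}) ` H" "{h2} \<in> (\<lambda>h. {h}) ` H" using assms(3,4) by simp_all
  from X.geodesic_vertices_quasiconvex[OF qc' S this \<open>p \<in> S\<close>] show ?thesis by blast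
qed

end

section \<open>Thin bigons in the relative Cayley graph\<close>

locale qc_subgroup_of_hyperbolic = marked_group_subgroup +
  fixes D Q :: real
  assumes D_nonneg: "0 \<le> D" and Q_nonneg: "0 \<le> Q"
    and thin_triangles: "\<And>u v w S1 S2 S3 p. X.geodesic_vertices u v S1 \<Longrightarrow>
      X.geodesic_vertices v w S2 \<Longrightarrow> X.geodesic_vertices w u S3 \<Longrightarrow> p \<in> S1 \<Longrightarrow>
      \<exists>q\<in>S2 \<union> S3. real (X.vdist p q) \<le> D"
    and quasiconvex: "\<And>h1 h2 S p. X.geodesic_vertices {h1} {h2} S \<Longrightarrow> h1 \<in> H \<Longrightarrow> h2 \<in> H \<Longrightarrow>
      p \<in> S \<Longrightarrow> \<exists>h\<in>H. real (X.vdist p {h}) \<le> Q"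
begin

abbreviation dX where "dX u v \<equiv> real (X.vdist u v)"
abbreviation dY where "dY U W \<equiv> real (Y.vdist U W)"

text \<open>By \<open>rcg_vdist_H_attained\<close> and \<open>rcg_vdist_H_le\<close>, \<open>dH a\<close> is also the distance in \<open>X\<close>
  from \<open>a\<close> to \<open>H\<close>.\<close>

abbreviation dH where "dH a \<equiv> dY (H #> a) H"

definition gromov_product_H :: "'a \<Rightarrow> 'a \<Rightarrow> real" where
  "gromov_product_H a b = (dH a + dH b - dX {a} {b}) / 2"

abbreviation gromov_product_Y where "gromov_product_Y \<equiv> gromov_product (\<lambda>U W. dY U W) H"

lemma dX_triangle:
  "u \<in> rcg_V G {\<one>} \<Longrightarrow> v \<in> rcg_V G {\<one>} \<Longrightarrow> w \<in> rcg_V G {\<one>} \<Longrightarrow> dX u w \<le> dX u v + dX v w"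
  using X.vdist_triangle by (metis of_nat_add of_nat_le_iff)

lemma dY_triangle:
  "U \<in> rcg_V G H \<Longrightarrow> V \<in> rcg_V G H \<Longrightarrow> W \<in> rcg_V G H \<Longrightarrow> dY U W \<le> dY U V + dY V W"
  using Y.vdist_triangle by (metis of_nat_add of_nat_le_iff)

lemma dH_attained: "a \<in> carrier G \<Longrightarrow> \<exists>h\<in>H. dX {a} {h} = dH a"
  using rcg_vdist_H_attained by metis

lemma dH_le: "a \<in> carrier G \<Longrightarrow> h \<in> H \<Longrightarrow> dH a \<le> dX {a} {h}"
  using rcg_vdist_H_le by simp

lemma H_singleton_in_cayley_V: "h \<in> H \<Longrightarrow> {h} \<in> rcg_V G {\<one>}"
  using singleton_in_cayley_V H_carrier by blast

lemma gromov_product_H_le_dist: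
  assumes x: "x \<in> carrier G" and y: "y \<in> carrier G" and S: "X.geodesic_vertices {x} {y} S"
    and q: "q \<in> S" and h: "h \<in> H"
  shows "gromov_product_H x y \<le> dX q {h}"
proof -
  have V: "q \<in> rcg_V G {\<one>}" "{h} \<in> rcg_V G {\<one>}" "{x} \<in> rcg_V G {\<one>}" "{y} \<in> rcg_V G {\<one>}"
    using X.geodesic_vertices_subset(1)[OF S] q H_singleton_in_cayley_V[OF h]
      singleton_in_cayley_V[OF x] singleton_in_cayley_V[OF y] by blast+
  have "dH x \<le> dX {x} q + dX q {h}" using dH_le[OF x h] dX_triangle[OF V(3,1,2)] by linarith
  moreover have "dH y \<le> dX q {y} + dX q {h}"
    using dH_le[OF y h] dX_triangle[OF V(4,1,2)] X.vdist_sym[OF V(4,1)] by linarith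
  moreover have "dX {x} q + dX q {y} = dX {x} {y}"
    using X.geodesic_vertices_vdist[OF S q] by (metis of_nat_add)
  ultimately have "dH x + dH y - dX {x} {y} \<le> 2 * dX q {h}" by linarith
  then show ?thesis unfolding gromov_product_H_def by simp
qed

lemma geodesic_quadrilateral_thin:
  assumes S: "X.geodesic_vertices a b S" and S1: "X.geodesic_vertices a c S1"
    and S2: "X.geodesic_vertices c d S2" and S3: "X.geodesic_vertices d b S3" and p: "p \<in> S"
  shows "\<exists>r\<in>S1 \<union> S2 \<union> S3. dX p r \<le> 2 * D"
proof -
  have "a \<in> rcg_V G {\<one>}" "d \<in> rcg_V G {\<one>}"
    using X.geodesic_vertices_subset S1 S3 by blast+
  then obtain Sd where Sd: "X.geodesic_vertices a d Sd" using X.geodesic_vertices_exists by blast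
  obtain q where q: "q \<in> S3 \<union> Sd" "dX p q \<le> D"
    using thin_triangles[OF S X.geodesic_vertices_sym[OF S3] X.geodesic_vertices_sym[OF Sd] p]
    by blast
  show ?thesis
  proof (cases "q \<in> S3")
    case True
    then show ?thesis using q D_nonneg by (intro bexI[of _ q]) auto
  next
    case False
    then have "q \<in> Sd" using q(1) by blast
    then obtain r where r: "r \<in> S2 \<union> S1" "dX q r \<le> D"
      using thin_triangles[OF Sd X.geodesic_vertices_sym[OF S2] X.geodesic_vertices_sym[OF S1]]
      by blast
    have "p \<in> rcg_V G {\<one>}" "q \<in> rcg_V G {\<one>}" "r \<in> rcg_V G {\<one>}"
      using X.geodesic_vertices_subset(1) S p Sd \<open>q \<in> Sd\<close> S1 S2 r(1) by blast+
    then have "dX p r \<le> dX p q + dX q r" by (rule dX_triangle)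
    then show ?thesis using q r by (intro bexI[of _ r]) auto
  qed
qed

lemma crossing_point_near_H:
  assumes a: "a \<in> carrier G" and b: "b \<in> carrier G"
    and ha: "ha \<in> H" "dX {a} {ha} = dH a" and hb: "hb \<in> H" "dX {b} {hb} = dH b"
    and S: "X.geodesic_vertices {a} {b} S" and S1: "X.geodesic_vertices {a} {ha} S1"
    and S3: "X.geodesic_vertices {hb} {b} S3"
    and xy: "x \<in> S" "y \<in> S" "X.vdist x y \<le> 1"
    and q1: "q1 \<in> S1" "dX x q1 \<le> 2 * D" and q2: "q2 \<in> S3" "dX y q2 \<le> 2 * D"
  shows "min (dX x {ha}) (dX x {hb}) \<le> gromov_product_H a b + 4 * D + 1"
proof -
  note in_V = X.geodesic_vertices_subset(1)[OF S, THEN subsetD]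
    X.geodesic_vertices_subset(1)[OF S1, THEN subsetD]
    X.geodesic_vertices_subset(1)[OF S3, THEN subsetD]
  note V = in_V(1)[OF xy(1)] in_V(2)[OF q1(1)] in_V(3)[OF q2(1)]
    singleton_in_cayley_V[OF a] singleton_in_cayley_V[OF b]
    H_singleton_in_cayley_V[OF ha(1)] H_singleton_in_cayley_V[OF hb(1)] in_V(1)[OF xy(2)]
  have "X.vdist {a} q1 + X.vdist q1 {ha} = X.vdist {a} {ha}"
    "X.vdist {hb} q2 + X.vdist q2 {b} = X.vdist {hb} {b}"
    "X.vdist {a} x + X.vdist x {b} = X.vdist {a} {b}"
    using X.geodesic_vertices_vdist[OF S1 q1(1)] X.geodesic_vertices_vdist[OF S3 q2(1)]
      X.geodesic_vertices_vdist[OF S xy(1)] by simp_all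
  then have "dX {a} q1 + dX q1 {ha} = dX {a} {ha}" "dX {hb} q2 + dX q2 {b} = dX {hb} {b}"
    "dX {a} x + dX x {b} = dX {a} {b}"
    by (simp_all only: of_nat_add[symmetric])
  moreover have "dX {a} x \<le> dX {a} q1 + dX q1 x" "dX x {b} \<le> dX x q2 + dX q2 {b}"
    "dX x {ha} \<le> dX x q1 + dX q1 {ha}" "dX x {hb} \<le> dX x q2 + dX q2 {hb}"
    "dX x q2 \<le> dX x y + dX y q2"
    using dX_triangle[OF V(4,2,1)] dX_triangle[OF V(1,3,5)] dX_triangle[OF V(1,2,6)]
      dX_triangle[OF V(1,3,7)] dX_triangle[OF V(1,8,3)] by simp_all
  moreover have "dX q1 x = dX x q1" "dX q2 {hb} = dX {hb} q2" "dX {hb} {b} = dX {b} {hb}"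
    using X.vdist_sym[OF V(2,1)] X.vdist_sym[OF V(3,7)] X.vdist_sym[OF V(7,5)] by simp_all
  ultimately have "dX x {ha} + dX x {hb} \<le> dH a + dH b - dX {a} {b} + 8 * D + 2"
    using ha(2) hb(2) q1(2) q2(2) xy(3) by linarith
  then show ?thesis unfolding gromov_product_H_def by (simp add: field_simps)
qed

text \<open>Some point of a geodesic from \<open>a\<close> to \<open>b\<close> comes close to \<open>H\<close>: either it is close to the
  geodesic between the nearest points \<open>ha\<close>, \<open>hb\<close> of \<open>H\<close>, which stays near \<open>H\<close> by
  quasiconvexity, or the geodesic passes from the side \<open>[a, ha]\<close> to the side \<open>[hb, b]\<close> of the
  quadrilateral, and the crossing point is close to \<open>ha\<close> or to \<open>hb\<close>.\<close>

lemma geodesic_near_H: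
  assumes a: "a \<in> carrier G" and b: "b \<in> carrier G" and S: "X.geodesic_vertices {a} {b} S"
  shows "\<exists>p\<in>S. \<exists>h\<in>H. dX p {h} \<le> max 0 (gromov_product_H a b) + (4 * D + 2 + Q)"
proof -
  obtain ha where ha: "ha \<in> H" "dX {a} {ha} = dH a" using dH_attained[OF a] by blast
  obtain hb where hb: "hb \<in> H" "dX {b} {hb} = dH b" using dH_attained[OF b] by blast
  note V = singleton_in_cayley_V[OF a] singleton_in_cayley_V[OF b]
    H_singleton_in_cayley_V[OF ha(1)] H_singleton_in_cayley_V[OF hb(1)]
  obtain S1 S2 S3 where S1: "X.geodesic_vertices {a} {ha} S1"
    and S2: "X.geodesic_vertices {ha} {hb} S2" and S3: "X.geodesic_vertices {hb} {b} S3"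
    using X.geodesic_vertices_exists[OF V(1,3)] X.geodesic_vertices_exists[OF V(3,4)]
      X.geodesic_vertices_exists[OF V(4,2)] by blast
  show ?thesis
  proof (cases "\<exists>p\<in>S. \<exists>r\<in>S2. dX p r \<le> 2 * D")
    case True
    then obtain p r where pr: "p \<in> S" "r \<in> S2" "dX p r \<le> 2 * D" by blast
    obtain h where h: "h \<in> H" "dX r {h} \<le> Q" using quasiconvex[OF S2 ha(1) hb(1) pr(2)] by blast
    have "p \<in> rcg_V G {\<one>}" "r \<in> rcg_V G {\<one>}"
      using pr(1,2) X.geodesic_vertices_subset(1)[OF S] X.geodesic_vertices_subset(1)[OF S2]
      by blast+
    then have "dX p {h} \<le> dX p r + dX r {h}"
      using dX_triangle H_singleton_in_cayley_V[OF h(1)] by blast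
    then show ?thesis using pr h D_nonneg by (intro bexI[of _ p] bexI[of _ h]) auto
  next
    case False
    let ?near1 = "\<lambda>x. \<exists>r\<in>S1. dX x r \<le> 2 * D" and ?near3 = "\<lambda>x. \<exists>r\<in>S3. dX x r \<le> 2 * D"
    have cover: "\<forall>x\<in>S. ?near1 x \<or> ?near3 x"
    proof
      fix x assume "x \<in> S"
      then obtain r where "r \<in> S1 \<union> S2 \<union> S3" "dX x r \<le> 2 * D"
        using geodesic_quadrilateral_thin[OF S S1 S2 S3] by blast
      then show "?near1 x \<or> ?near3 x" using False \<open>x \<in> S\<close> by blast
    qed
    have "?near1 {a}" using X.geodesic_vertices_subset(2)[OF S1] D_nonneg
      by (intro bexI[of _ "{a}"]) simp_all
    moreover have "?near3 {b}" using X.geodesic_vertices_subset(3)[OF S3] D_nonneg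
      by (intro bexI[of _ "{b}"]) simp_all
    ultimately obtain x y where xy: "x \<in> S" "?near1 x" "y \<in> S" "?near3 y" "X.vdist x y \<le> 1"
      using X.geodesic_vertices_crossing[OF S _ _ cover] by blast
    obtain q1 where q1: "q1 \<in> S1" "dX x q1 \<le> 2 * D" using xy(2) by blast
    obtain q2 where q2: "q2 \<in> S3" "dX y q2 \<le> 2 * D" using xy(4) by blast
    have "min (dX x {ha}) (dX x {hb}) \<le> gromov_product_H a b + 4 * D + 1"
      using crossing_point_near_H[OF a b ha hb S S1 S3 xy(1,3,5) q1 q2] .
    then have "dX x {ha} \<le> max 0 (gromov_product_H a b) + (4 * D + 2 + Q) \<or>
        dX x {hb} \<le> max 0 (gromov_product_H a b) + (4 * D + 2 + Q)"
      using Q_nonneg by linarith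
    then show ?thesis using xy(1) ha(1) hb(1) by blast
  qed
qed

lemma gromov_product_H_le_Y:
  assumes a: "a \<in> carrier G" and b: "b \<in> carrier G"
  shows "max 0 (gromov_product_H a b) \<le> gromov_product_Y (H #> a) (H #> b)"
proof -
  have "Y.vdist (H #> a) (H #> b) \<le> X.vdist {a} {b}"
    using rcg_vdist_le_cayley[OF a b subgroup.one_closed[OF subgroup]] b by simp
  then have "gromov_product_H a b \<le> gromov_product_Y (H #> a) (H #> b)"
    unfolding gromov_product_def gromov_product_H_def by (simp add: divide_right_mono)
  moreover have "dY (H #> a) (H #> b) \<le> dH a + dH b"
    using dY_triangle[OF r_coset_in_rcg_V[OF a] H_in_rcg_V r_coset_in_rcg_V[OF b]]
      Y.vdist_sym[OF H_in_rcg_V r_coset_in_rcg_V[OF b]] by simp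
  then have "0 \<le> gromov_product_Y (H #> a) (H #> b)" unfolding gromov_product_def by simp
  ultimately show ?thesis by simp
qed

lemma gromov_product_Y_hyperbolic:
  assumes U: "U \<in> rcg_V G H" and W: "W \<in> rcg_V G H" and Z: "Z \<in> rcg_V G H"
  shows "min (gromov_product_Y U Z) (gromov_product_Y Z W) - (5 * D + 2 + Q) \<le> gromov_product_Y U W"
proof -
  obtain a c0 b0 where a: "a \<in> carrier G" "U = H #> a" and c0: "c0 \<in> carrier G" "Z = H #> c0"
    and b0: "b0 \<in> carrier G" "W = H #> b0"
    using U Z W unfolding rcg_V_def RCOSETS_def by blast
  obtain c where c: "c \<in> carrier G" "H #> c = Z" "X.vdist {a} {c} = Y.vdist U Z"
    using rcg_vdist_attained[OF a(1) c0(1)] unfolding a(2) c0(2) .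
  obtain b where b: "b \<in> carrier G" "H #> b = W" "X.vdist {c} {b} = Y.vdist Z W"
    using rcg_vdist_attained[OF c(1) b0(1)] unfolding c(2) b0(2) .
  note V = singleton_in_cayley_V[OF a(1)] singleton_in_cayley_V[OF b(1)]
    singleton_in_cayley_V[OF c(1)]
  obtain Sab Sac Scb where Sab: "X.geodesic_vertices {a} {b} Sab"
    and Sac: "X.geodesic_vertices {a} {c} Sac" and Scb: "X.geodesic_vertices {c} {b} Scb"
    using X.geodesic_vertices_exists[OF V(1,2)] X.geodesic_vertices_exists[OF V(1,3)]
      X.geodesic_vertices_exists[OF V(3,2)] by blast
  obtain p h where p: "p \<in> Sab" and h: "h \<in> H"
    and ph: "dX p {h} \<le> max 0 (gromov_product_H a b) + (4 * D + 2 + Q)"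
    using geodesic_near_H[OF a(1) b(1) Sab] by blast
  obtain q where q: "q \<in> Scb \<union> Sac" "dX p q \<le> D"
    using thin_triangles[OF Sab X.geodesic_vertices_sym[OF Scb] X.geodesic_vertices_sym[OF Sac] p]
    by blast
  have q_V: "q \<in> rcg_V G {\<one>}"
    using q(1) X.geodesic_vertices_subset(1)[OF Scb] X.geodesic_vertices_subset(1)[OF Sac] by blast
  have p_V: "p \<in> rcg_V G {\<one>}" using p X.geodesic_vertices_subset(1)[OF Sab] by blast
  have "dX q {h} \<le> dX q p + dX p {h}" "dX q p = dX p q"
    using dX_triangle[OF q_V p_V H_singleton_in_cayley_V[OF h]] X.vdist_sym[OF q_V p_V]
    by simp_all
  moreover have "max 0 (gromov_product_H a b) \<le> gromov_product_Y U W"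
    using gromov_product_H_le_Y[OF a(1) b(1)] a(2) b(2) by simp
  ultimately have qh: "dX q {h} \<le> gromov_product_Y U W + (5 * D + 2 + Q)"
    using q(2) ph by linarith
  from q(1) show ?thesis
  proof
    assume "q \<in> Sac"
    then have "gromov_product_H a c \<le> dX q {h}"
      by (rule gromov_product_H_le_dist[OF a(1) c(1) Sac _ h])
    moreover have "gromov_product_H a c = gromov_product_Y U Z"
      unfolding gromov_product_H_def gromov_product_def using a(2) c by simp
    ultimately show ?thesis using qh by linarith
  next
    assume "q \<in> Scb"
    then have "gromov_product_H c b \<le> dX q {h}"
      by (rule gromov_product_H_le_dist[OF c(1) b(1) Scb _ h])
    moreover have "gromov_product_H c b = gromov_product_Y Z W"
      unfolding gromov_product_H_def gromov_product_def using c(2) b by simp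
    ultimately show ?thesis using qh by linarith
  qed
qed

lemma rcg_four_point:
  assumes "U \<in> rcg_V G H" "W \<in> rcg_V G H" "Z \<in> rcg_V G H" "T \<in> rcg_V G H"
  shows "dY U W + dY Z T \<le> max (dY U Z + dY W T) (dY U T + dY W Z) + 4 * (5 * D + 2 + Q)"
proof (rule four_point_of_gromov_product[where S = "rcg_V G H" and w = H and d = "\<lambda>U W. dY U W"])
  show "\<And>x y. x \<in> rcg_V G H \<Longrightarrow> y \<in> rcg_V G H \<Longrightarrow> dY x y = dY y x"
    using Y.vdist_sym by simp
qed (use gromov_product_Y_hyperbolic assms in auto)

lemma rcg_bigon_thin:
  assumes "Y.geodesic \<alpha> La" "Y.geodesic \<beta> Lb" "\<alpha> 0 = \<beta> 0" "\<alpha> La = \<beta> Lb"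
  shows "\<alpha> ` {0..La} \<subseteq> Y.nbhd (4 * (5 * D + 2 + Q) + 8) (\<beta> ` {0..Lb})"
  by (rule Y.geodesic_bigon_thin[OF rcg_four_point assms])

end

theorem theorem3p4:
  fixes G :: "('g, 'b) monoid_scheme" and A :: "'a set" and \<pi> :: "'a \<Rightarrow> 'g" and H :: "'g set"
  assumes "hyperbolic_group G A \<pi>"
    and "subgroup H G"
    and "quasiconvex G A \<pi> H"
  shows "\<exists>\<delta>'\<ge>0. \<forall>\<alpha> La \<beta> Lb.
           rcg_geodesic G \<pi> H A \<alpha> La \<and> rcg_geodesic G \<pi> H A \<beta> Lb \<and>
           \<alpha> 0 = \<beta> 0 \<and> \<alpha> La = \<beta> Lb \<longrightarrow>
           \<alpha> ` {0..La} \<subseteq> rcg_nbhd G \<pi> H A \<delta>' (\<beta> ` {0..Lb}) \<and>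
           \<beta> ` {0..Lb} \<subseteq> rcg_nbhd G \<pi> H A \<delta>' (\<alpha> ` {0..La})"
proof -
  note hyperbolic = assms(1)[unfolded hyperbolic_group_def]
  have setting: "marked_group_subgroup G A \<pi> H"
    unfolding marked_group_subgroup_def marked_group_subgroup_axioms_def marked_group_def
      marked_group_axioms_def using hyperbolic assms(2) by simp
  then interpret marked_group_subgroup G A \<pi> H .
  obtain \<delta> where "0 \<le> \<delta>" and thin: "\<forall>\<alpha> La \<beta> Lb \<gamma> Lc. X.geodesic \<alpha> La \<and> X.geodesic \<beta> Lb \<and>
      X.geodesic \<gamma> Lc \<and> \<alpha> La = \<beta> 0 \<and> \<beta> Lb = \<gamma> 0 \<and> \<gamma> Lc = \<alpha> 0 \<longrightarrow>
      \<alpha> ` {0..La} \<subseteq> X.nbhd \<delta> (\<beta> ` {0..Lb} \<union> \<gamma> ` {0..Lc})"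
    using hyperbolic by (elim conjE exE) blast
  obtain C where "0 < C" and qc: "\<forall>\<alpha> L. X.geodesic \<alpha> L \<and> \<alpha> 0 \<in> (\<lambda>h. Vx {h}) ` H \<and>
      \<alpha> L \<in> (\<lambda>h. Vx {h}) ` H \<longrightarrow> \<alpha> ` {0..L} \<subseteq> X.nbhd C ((\<lambda>h. Vx {h}) ` H)"
    using assms(3) unfolding quasiconvex_def by (elim conjE exE) blast
  have "qc_subgroup_of_hyperbolic G A \<pi> H (\<delta> + 2) C"
  proof (intro qc_subgroup_of_hyperbolic.intro setting qc_subgroup_of_hyperbolic_axioms.intro)
    show "0 \<le> \<delta> + 2" "0 \<le> C" using \<open>0 \<le> \<delta>\<close> \<open>0 < C\<close> by simp_all
  qed (fact X.geodesic_triangle_vertices_thin[OF thin] cayley_quasiconvex_vertices[OF qc])+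
  then interpret qc_subgroup_of_hyperbolic G A \<pi> H "\<delta> + 2" C .
  show ?thesis
  proof (intro exI[of _ "4 * (5 * (\<delta> + 2) + 2 + C) + 8"] conjI allI impI)
    show "0 \<le> 4 * (5 * (\<delta> + 2) + 2 + C) + 8" using \<open>0 \<le> \<delta>\<close> \<open>0 < C\<close> by simp
    fix \<alpha> La \<beta> Lb
    assume "Y.geodesic \<alpha> La \<and> Y.geodesic \<beta> Lb \<and> \<alpha> 0 = \<beta> 0 \<and> \<alpha> La = \<beta> Lb"
    then show "\<alpha> ` {0..La} \<subseteq> Y.nbhd (4 * (5 * (\<delta> + 2) + 2 + C) + 8) (\<beta> ` {0..Lb})"
      and "\<beta> ` {0..Lb} \<subseteq> Y.nbhd (4 * (5 * (\<delta> + 2) + 2 + C) + 8) (\<alpha> ` {0..La})"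
      using rcg_bigon_thin by simp_all
  qed
qed

end
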